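(* Let $0<p<1$, let $X_1,X_2,\ldots$ be i.i.d. with values in $\{0,1,a\}$, $P(X_1=a)=p$, $P(X_1=0)=P(X_1=1)=\frac{1-p}{2}$, and let $Y_1,Y_2,\ldots$ be i.i.d. Bernoulli$(1/2)$, independent of the $X_i$. Let $L_n$ be the length of a longest common subsequence of $X_1\ldots X_n$ and $Y_1\ldots Y_n$. Let $(Z^k)_{k}$ be generated by the bit-drop scheme described in the context, independently of $(Y_i)$, and let $N^a$ be a Binomial$(n,p)$ random variable independent of $(Z^k)_k$ and $(Y_i)$. For $0\le k\le n$ let $L_n^a(k)$ be the length of a longest common subsequence of $Z^k$ and $Y_1\ldots Y_n$. Then $L_n$ has the same distribution as $L^a_n(n-N^a)$.
   Context: Bit-drop scheme: let $V_1,V_2,\ldots$ be i.i.d. Bernoulli$(1/2)$ variables and let $T_3,T_4,\ldots$ be independent integer-valued random variables, independent of $(V_k)$, with $T_{k+1}$ uniformly distributed on $\{2,\ldots,k\}$. Set $Z^2:=V_1V_2$ and, given the binary word $Z^k=Z^k_1\ldots Z^k_k$, define $Z^{k+1}$ of length $k+1$ by $Z^{k+1}_j:=Z^k_j$ for $j<T_{k+1}$, $Z^{k+1}_{T_{k+1}}:=V_{k+1}$, and $Z^{k+1}_j:=Z^k_{j-1}$ for $T_{k+1}<j\le k+1$. (So $V_{k+1}$ is the bit added at step $k+1$ and $T_{k+1}$ its position.) Convention: $Z^0$ is the empty word and $Z^1:=V_1$. *)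

theory Defs
  imports "HOL-Probability.Probability" "HOL-Library.Sublist"
begin

datatype sym = S0 | S1 | Sa

definition bit :: "bool \<Rightarrow> sym" where
  "bit b = (if b then S1 else S0)"

definition lcs :: "'a list \<Rightarrow> 'a list \<Rightarrow> nat" where
  "lcs xs ys = Max {length zs | zs. subseq zs xs \<and> subseq zs ys}"

text \<open>Insert bit v at (1-based) position t of the word z.\<close>
definition insert_at :: "nat \<Rightarrow> bool \<Rightarrow> bool list \<Rightarrow> bool list" where
  "insert_at t v z = take (t - 1) z @ [v] @ drop (t - 1) z"

text \<open>Law of the word Z^k of the bit-drop scheme: Z^0 empty, Z^1 = V_1,
  Z^2 = V_1 V_2, and for k \<ge> 2, Z^(k+1) is Z^k with a fresh independent
  Bernoulli(1/2) bit V_(k+1) inserted at an independent position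
  T_(k+1) uniform on {2..k}.\<close>
fun bitdrop_pmf :: "nat \<Rightarrow> bool list pmf" where
  "bitdrop_pmf 0 = return_pmf []"
| "bitdrop_pmf (Suc 0) = map_pmf (\<lambda>v. [v]) (bernoulli_pmf (1/2))"
| "bitdrop_pmf (Suc (Suc 0)) =
     do { v1 \<leftarrow> bernoulli_pmf (1/2); v2 \<leftarrow> bernoulli_pmf (1/2); return_pmf [v1, v2] }"
| "bitdrop_pmf (Suc (Suc (Suc k))) =
     do { z \<leftarrow> bitdrop_pmf (Suc (Suc k));
          v \<leftarrow> bernoulli_pmf (1/2);
          t \<leftarrow> pmf_of_set {2..Suc (Suc k)};
          return_pmf (insert_at t v z) }"

end

theory Submission
  imports Defs
begin

text \<open>
  The word Y_1 ... Y_n contains no letter a, so deleting the a's from X_1 ... X_n does not change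
  the LCS. Writing each X_i as "a with probability p, otherwise a fair bit", the deleted word is a
  sequence of n - N i.i.d. fair bits with N ~ Binomial(n, p) independent of them. Finally, the
  bit-drop scheme produces i.i.d. fair bits: inserting an independent fair bit at any fixed position
  of a word of i.i.d. fair bits yields again a word of i.i.d. fair bits, whatever the (independent)
  position.
\<close>

lemma replicate_pmf_insert:
  "do {xs \<leftarrow> replicate_pmf m B; x \<leftarrow> B; return_pmf (take j xs @ x # drop j xs)}
     = replicate_pmf (Suc m) B"
proof (induction m arbitrary: j)
  case 0
  then show ?case by (simp add: bind_return_pmf)
next
  case (Suc m)
  show ?case
  proof (cases j)
    case 0
    then show ?thesis
      by (simp add: bind_assoc_pmf bind_return_pmf bind_commute_pmf[of "replicate_pmf m B"])
        (rule bind_commute_pmf)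
  next
    case (Suc i)
    then have "do {xs \<leftarrow> replicate_pmf (Suc m) B; x \<leftarrow> B; return_pmf (take j xs @ x # drop j xs)}
        = do {y \<leftarrow> B; ys \<leftarrow> do {xs \<leftarrow> replicate_pmf m B; x \<leftarrow> B; return_pmf (take i xs @ x # drop i xs)};
              return_pmf (y # ys)}"
      by (simp add: bind_assoc_pmf bind_return_pmf)
    then show ?thesis
      by (simp only: Suc.IH replicate_pmf.simps)
  qed
qed

lemma bitdrop_pmf_eq_replicate_pmf: "bitdrop_pmf k = replicate_pmf k (bernoulli_pmf (1/2))"
proof (induction k rule: bitdrop_pmf.induct)
  case (4 k)
  have "bitdrop_pmf (Suc (Suc (Suc k))) =
     do {t \<leftarrow> pmf_of_set {2..Suc (Suc k)};
         z \<leftarrow> replicate_pmf (Suc (Suc k)) (bernoulli_pmf (1/2));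
         v \<leftarrow> bernoulli_pmf (1/2);
         return_pmf (take (t - 1) z @ v # drop (t - 1) z)}"
    using 4 by (simp add: insert_at_def bind_commute_pmf[of "pmf_of_set _"])
  then show ?case
    by (simp only: replicate_pmf_insert bind_pmf_const)
qed (simp_all add: map_pmf_def bind_return_pmf bind_assoc_pmf)

lemma replicate_pmf_map_pmf: "replicate_pmf n (map_pmf f p) = map_pmf (map f) (replicate_pmf n p)"
  by (induction n) (simp_all add: map_pmf_def bind_assoc_pmf bind_return_pmf)

lemma replicate_pmf_Cons_binomial_pmf:
  assumes p: "p \<in> {0..1}"
  shows "do {y \<leftarrow> Y; ys \<leftarrow> do {N \<leftarrow> binomial_pmf n p; replicate_pmf (n - N) Y}; return_pmf (y # ys)}
       = do {N \<leftarrow> binomial_pmf n p; replicate_pmf (Suc n - N) Y}"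
proof -
  have "do {y \<leftarrow> Y; ys \<leftarrow> do {N \<leftarrow> binomial_pmf n p; replicate_pmf (n - N) Y}; return_pmf (y # ys)}
      = do {N \<leftarrow> binomial_pmf n p; replicate_pmf (Suc (n - N)) Y}"
    by (simp add: bind_assoc_pmf) (rule bind_commute_pmf)
  also have "\<dots> = do {N \<leftarrow> binomial_pmf n p; replicate_pmf (Suc n - N) Y}"
  proof (intro bind_pmf_cong refl)
    fix N assume "N \<in> set_pmf (binomial_pmf n p)"
    then have "N \<le> n" using p by (auto simp: set_pmf_binomial_eq split: if_splits)
    then show "replicate_pmf (Suc (n - N)) Y = replicate_pmf (Suc n - N) Y"
      by (simp add: Suc_diff_le)
  qed
  finally show ?thesis .
qed

lemma map_pmf_filter_replicate_pmf_mixture: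
  assumes p: "p \<in> {0..1}" and a: "a \<notin> set_pmf Y"
  shows "map_pmf (filter (\<lambda>x. x \<noteq> a))
           (replicate_pmf n (do {b \<leftarrow> bernoulli_pmf p; if b then return_pmf a else Y}))
         = do {N \<leftarrow> binomial_pmf n p; replicate_pmf (n - N) Y}"
proof (induction n)
  case 0
  show ?case by (simp add: binomial_pmf_0[OF p] bind_return_pmf)
next
  case (Suc n)
  define X where "X = do {b \<leftarrow> bernoulli_pmf p; if b then return_pmf a else Y}"
  define F where "F = filter (\<lambda>x. x \<noteq> a)"
  define R where "R = (\<lambda>n. do {N \<leftarrow> binomial_pmf n p; replicate_pmf (n - N) Y})"
  have IH: "map_pmf F (replicate_pmf n X) = R n"
    using Suc.IH unfolding X_def F_def R_def .
  have "map_pmf F (replicate_pmf (Suc n) X) = do {x \<leftarrow> X; map_pmf (\<lambda>xs. F (x # xs)) (replicate_pmf n X)}"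
    by (simp add: map_pmf_def bind_assoc_pmf bind_return_pmf)
  also have "\<dots> = do {b \<leftarrow> bernoulli_pmf p;
            if b then map_pmf F (replicate_pmf n X)
            else do {y \<leftarrow> Y; ys \<leftarrow> map_pmf F (replicate_pmf n X); return_pmf (y # ys)}}"
  proof -
    have X_bind: "bind_pmf X f = do {b \<leftarrow> bernoulli_pmf p; if b then f a else bind_pmf Y f}" for f
      by (auto simp: X_def bind_assoc_pmf bind_return_pmf intro!: bind_pmf_cong)
    have F_a: "F (a # xs) = F xs" for xs
      by (simp add: F_def)
    have F_Y: "map_pmf (\<lambda>xs. F (y # xs)) M = do {ys \<leftarrow> map_pmf F M; return_pmf (y # ys)}"
      if "y \<in> set_pmf Y" for y and M :: "'a list pmf"
    proof -
      from that a have "y \<noteq> a" by blast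
      then show ?thesis by (simp add: F_def map_pmf_def bind_assoc_pmf bind_return_pmf)
    qed
    show ?thesis
      unfolding X_bind[of "\<lambda>x. map_pmf (\<lambda>xs. F (x # xs)) (replicate_pmf n X)"]
      by (auto simp: F_a F_Y intro!: bind_pmf_cong)
  qed
  also have "\<dots> = do {b \<leftarrow> bernoulli_pmf p;
                       if b then R n else do {N \<leftarrow> binomial_pmf n p; replicate_pmf (Suc n - N) Y}}"
    unfolding IH R_def replicate_pmf_Cons_binomial_pmf[OF p] ..
  also have "\<dots> = R (Suc n)"
    unfolding R_def
    by (auto simp: binomial_pmf_Suc[OF p] bind_assoc_pmf bind_return_pmf intro!: bind_pmf_cong)
  finally show ?case unfolding X_def F_def R_def .
qed

lemma lcs_filter_left:
  assumes "\<forall>y \<in> set ys. P y"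
  shows "lcs (filter P xs) ys = lcs xs ys"
proof -
  have "subseq zs (filter P xs) \<and> subseq zs ys \<longleftrightarrow> subseq zs xs \<and> subseq zs ys" for zs
  proof
    assume zs: "subseq zs xs \<and> subseq zs ys"
    have "P z" if "z \<in> set zs" for z
      using list_emb_set[of "(=)" zs ys z] zs that assms by blast
    then have "filter P zs = zs"
      by simp
    with zs show "subseq zs (filter P xs) \<and> subseq zs ys"
      by (metis subseq_filter)
  next
    assume "subseq zs (filter P xs) \<and> subseq zs ys"
    then show "subseq zs xs \<and> subseq zs ys"
      using subseq_filter_left subseq_order.order_trans by blast
  qed
  then show ?thesis
    unfolding lcs_def by simp
qed

lemma sym_pmf_eq_mixture:
  assumes "p \<in> {0..1}"
    and "pmf X Sa = p" and "pmf X S0 = (1 - p) / 2" and "pmf X S1 = (1 - p) / 2"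
  shows "X = do {b \<leftarrow> bernoulli_pmf p; if b then return_pmf Sa else map_pmf bit (bernoulli_pmf (1/2))}"
proof (rule pmf_eqI)
  fix s
  have "{b. b} = {True}" "{b. \<not> b} = {False}"
    by auto
  then show "pmf X s = pmf (do {b \<leftarrow> bernoulli_pmf p;
                                if b then return_pmf Sa else map_pmf bit (bernoulli_pmf (1/2))}) s"
    using assms by (cases s) (auto simp: pmf_bind pmf_map measure_pmf_single bit_def vimage_def)
qed

theorem lemma2:
  fixes p :: real and n :: nat and X :: "sym pmf"
  assumes "0 < p" and "p < 1"
    and "pmf X Sa = p" and "pmf X S0 = (1 - p) / 2" and "pmf X S1 = (1 - p) / 2"
  shows "map_pmf (\<lambda>(xs, ys). lcs xs (map bit ys))
           (pair_pmf (replicate_pmf n X) (replicate_pmf n (bernoulli_pmf (1/2))))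
       = do { N \<leftarrow> binomial_pmf n p;
              z \<leftarrow> bitdrop_pmf (n - N);
              ys \<leftarrow> replicate_pmf n (bernoulli_pmf (1/2));
              return_pmf (lcs (map bit z) (map bit ys)) }"
proof -
  have p: "p \<in> {0..1}"
    using assms by simp
  have lcs_drop_a: "lcs (filter (\<lambda>s. s \<noteq> Sa) xs) (map bit ys) = lcs xs (map bit ys)" for xs ys
    by (rule lcs_filter_left) (auto simp: bit_def)
  have "Sa \<notin> set_pmf (map_pmf bit (bernoulli_pmf (1/2)))"
    by (auto simp: bit_def)
  from map_pmf_filter_replicate_pmf_mixture[OF p this]
  have letters: "map_pmf (filter (\<lambda>s. s \<noteq> Sa)) (replicate_pmf n X)
      = do {N \<leftarrow> binomial_pmf n p; map_pmf (map bit) (bitdrop_pmf (n - N))}"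
    by (simp add: sym_pmf_eq_mixture[OF p assms(3-5)] replicate_pmf_map_pmf bitdrop_pmf_eq_replicate_pmf)
  have "map_pmf (\<lambda>(xs, ys). lcs xs (map bit ys))
           (pair_pmf (replicate_pmf n X) (replicate_pmf n (bernoulli_pmf (1/2))))
      = do {w \<leftarrow> map_pmf (filter (\<lambda>s. s \<noteq> Sa)) (replicate_pmf n X);
            ys \<leftarrow> replicate_pmf n (bernoulli_pmf (1/2));
            return_pmf (lcs w (map bit ys))}"
    by (simp add: pair_pmf_def map_pmf_def bind_assoc_pmf bind_return_pmf lcs_drop_a)
  also have "\<dots> = do { N \<leftarrow> binomial_pmf n p;
              z \<leftarrow> bitdrop_pmf (n - N);
              ys \<leftarrow> replicate_pmf n (bernoulli_pmf (1/2));
              return_pmf (lcs (map bit z) (map bit ys)) }"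
    by (simp add: letters bind_assoc_pmf bind_map_pmf)
  finally show ?thesis .
qed

end
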